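(* Let $\Pi$ and $P$ be node-edge-checkable problems. Then: 1. $\Pi\xrightarrow{0}\tau_P(\tau_P(\Pi))$; 2. $\tau_P(\Pi)$ and $\tau_P(\tau_P(\tau_P(\Pi)))$ are equivalent, i.e., each is a relaxation of the other.
   Context: Fix $\Delta$. A node-edge-checkable problem $\Pi=(\Sigma_\Pi,\mathcal{N}_\Pi,\mathcal{E}_\Pi)$ has a finite label set, a node constraint $\mathcal{N}_\Pi$ (a set of cardinality-$\Delta$ multisets over $\Sigma_\Pi$) and an edge constraint $\mathcal{E}_\Pi$ (a set of cardinality-$2$ multisets). Relaxation. $\Pi\xrightarrow{0}\Pi'$ means there is a map $f$ with the following properties. For every $C=L_1\dots L_\Delta\in\mathcal{N}_\Pi$ and every $j$, $f$ assigns a label $f(C,j)\in\Sigma_{\Pi'}$. The map must satisfy: - $f(C,1)\dots f(C,\Delta)\in\mathcal{N}_{\Pi'}$; - whenever the $j$-th entry of $C$ and the $j'$-th entry of $C'$ form an element of $\mathcal{E}_\Pi$, then $f(C,j)f(C',j')\in\mathcal{E}_{\Pi'}$. The problem $\mathrm{R}^*(P)$ is defined as follows. - Labels are the nonempty subsets of $\Sigma_P$. - Node configurations are the $S_1\dots S_\Delta$ admitting $L_i\in S_i$ with $L_1\dots L_\Delta\in\mathcal{N}_P$. - Edge configurations are the $S_1S_2$ with $L_1L_2\in\mathcal{E}_P$ for all $L_1\in S_1,L_2\in S_2$. The tripotent input $\tau_P(\Pi)$ is defined as follows. - Labels are all functions $\Sigma_\Pi\to\Sigma_{\mathrm{R}^*(P)}$.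 - $f_1\dots f_\Delta$ is a node configuration iff $f_1(L_1)\dots f_\Delta(L_\Delta)\in\mathcal{N}_{\mathrm{R}^*(P)}$ for all $L_1\dots L_\Delta\in\mathcal{N}_\Pi$. - $f_1f_2$ is an edge configuration iff $f_1(L_1)f_2(L_2)\in\mathcal{E}_{\mathrm{R}^*(P)}$ for all $L_1L_2\in\mathcal{E}_\Pi$. *)

theory Defs
  imports Main "HOL-Library.Multiset" "HOL-Library.FuncSet"
begin

record 'a nec =
  labels :: "'a set"
  nodeC  :: "'a multiset set"
  edgeC  :: "'a multiset set"

definition wf_nec :: "nat \<Rightarrow> 'a nec \<Rightarrow> bool" where
  "wf_nec \<Delta> Prb \<longleftrightarrow> finite (labels Prb)
     \<and> (\<forall>C\<in>nodeC Prb. size C = \<Delta> \<and> set_mset C \<subseteq> labels Prb)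
     \<and> (\<forall>C\<in>edgeC Prb. size C = 2 \<and> set_mset C \<subseteq> labels Prb)"

definition relax0 :: "nat \<Rightarrow> 'a nec \<Rightarrow> 'b nec \<Rightarrow> bool" where
  "relax0 \<Delta> Prb Prb' \<longleftrightarrow> (\<exists>(ent :: 'a multiset \<Rightarrow> nat \<Rightarrow> 'a) (f :: 'a multiset \<Rightarrow> nat \<Rightarrow> 'b).
     (\<forall>C\<in>nodeC Prb.
        mset (map (ent C) [0..<\<Delta>]) = C
      \<and> (\<forall>j<\<Delta>. f C j \<in> labels Prb')
      \<and> mset (map (f C) [0..<\<Delta>]) \<in> nodeC Prb')
   \<and> (\<forall>C\<in>nodeC Prb. \<forall>C'\<in>nodeC Prb. \<forall>j<\<Delta>. \<forall>j'<\<Delta>.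
        {#ent C j, ent C' j'#} \<in> edgeC Prb \<longrightarrow> {#f C j, f C' j'#} \<in> edgeC Prb'))"

definition Rstar :: "nat \<Rightarrow> 'b nec \<Rightarrow> 'b set nec" where
  "Rstar \<Delta> P = \<lparr> labels = {S. S \<subseteq> labels P \<and> S \<noteq> {}},
     nodeC = {M. size M = \<Delta> \<and> set_mset M \<subseteq> {S. S \<subseteq> labels P \<and> S \<noteq> {}} \<and>
        (\<exists>Ss Ls. mset Ss = M \<and> length Ls = length Ss \<and> (\<forall>i<length Ss. Ls ! i \<in> Ss ! i)
                 \<and> mset Ls \<in> nodeC P)},
     edgeC = {M. \<exists>S1 S2. M = {#S1, S2#} \<and> S1 \<subseteq> labels P \<and> S1 \<noteq> {}
                 \<and> S2 \<subseteq> labels P \<and> S2 \<noteq> {}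
                 \<and> (\<forall>L1\<in>S1. \<forall>L2\<in>S2. {#L1, L2#} \<in> edgeC P)} \<rparr>"

text \<open>The tripotent input. Labels are functions from the labels of Pi to the labels
  of R*(P), represented as extensional functions (undefined outside the domain).\<close>
definition tau :: "nat \<Rightarrow> 'b nec \<Rightarrow> 'a nec \<Rightarrow> ('a \<Rightarrow> 'b set) nec" where
  "tau \<Delta> P Prb = (let R = Rstar \<Delta> P; F = labels Prb \<rightarrow>\<^sub>E labels R in
    \<lparr> labels = F,
      nodeC = {M. size M = \<Delta> \<and> set_mset M \<subseteq> F \<and>
        (\<exists>fs. mset fs = M \<and>
           (\<forall>Ls. length Ls = \<Delta> \<longrightarrow> mset Ls \<in> nodeC Prb \<longrightarrow>
                 mset (map2 (\<lambda>g L. g L) fs Ls) \<in> nodeC R))},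
      edgeC = {M. \<exists>f1 f2. M = {#f1, f2#} \<and> f1 \<in> F \<and> f2 \<in> F \<and>
        (\<forall>L1 L2. {#L1, L2#} \<in> edgeC Prb \<longrightarrow> {#f1 L1, f2 L2#} \<in> edgeC R)} \<rparr>)"

end

theory Submission
  imports Defs "HOL-Combinatorics.Permutations"
begin

text \<open>A label map sending node and edge configurations to node and edge configurations
  (a homomorphism) yields a zero-round relaxation. Evaluation \<open>L \<mapsto> (g \<mapsto> g L)\<close> is a
  homomorphism \<open>\<Pi> \<rightarrow> \<tau>(\<tau>(\<Pi>))\<close>; this is part 1, and for \<open>\<tau>(\<Pi>)\<close> one direction of part 2.
  Moreover \<open>\<tau>\<close> is contravariant: precomposition with a homomorphism \<open>\<Pi> \<rightarrow> \<Pi>'\<close> is a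
  homomorphism \<open>\<tau>(\<Pi>') \<rightarrow> \<tau>(\<Pi>)\<close>, so precomposing with evaluation gives
  \<open>\<tau>(\<tau>(\<tau>(\<Pi>))) \<rightarrow> \<tau>(\<Pi>)\<close>.\<close>

definition nec_hom :: "('a \<Rightarrow> 'b) \<Rightarrow> 'a nec \<Rightarrow> 'b nec \<Rightarrow> bool" where
  "nec_hom \<phi> Prb Prb' \<longleftrightarrow> \<phi> \<in> labels Prb \<rightarrow> labels Prb'
     \<and> (\<forall>C\<in>nodeC Prb. image_mset \<phi> C \<in> nodeC Prb')
     \<and> (\<forall>L1 L2. {#L1, L2#} \<in> edgeC Prb \<longrightarrow> {#\<phi> L1, \<phi> L2#} \<in> edgeC Prb')"

lemma nec_homD:
  assumes "nec_hom \<phi> Prb Prb'"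
  shows "L \<in> labels Prb \<Longrightarrow> \<phi> L \<in> labels Prb'"
    and "C \<in> nodeC Prb \<Longrightarrow> image_mset \<phi> C \<in> nodeC Prb'"
    and "{#L1, L2#} \<in> edgeC Prb \<Longrightarrow> {#\<phi> L1, \<phi> L2#} \<in> edgeC Prb'"
  using assms unfolding nec_hom_def by auto

lemma wf_nec_labelsD:
  assumes "wf_nec \<Delta> Prb"
  shows "C \<in> nodeC Prb \<Longrightarrow> L \<in># C \<Longrightarrow> L \<in> labels Prb"
    and "{#L1, L2#} \<in> edgeC Prb \<Longrightarrow> L1 \<in> labels Prb \<and> L2 \<in> labels Prb"
  using assms unfolding wf_nec_def by fastforce+

lemma relax0_if_nec_hom:
  fixes Prb :: "'a nec"
  assumes wf: "wf_nec \<Delta> Prb" and hom: "nec_hom \<phi> Prb Prb'"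
  shows "relax0 \<Delta> Prb Prb'"
proof -
  define enum :: "'a multiset \<Rightarrow> 'a list" where "enum C = (SOME xs. mset xs = C)" for C
  have mset_enum: "mset (enum C) = C" for C unfolding enum_def by (rule someI_ex) (rule ex_mset)
  define ent where "ent C = (!) (enum C)" for C
  have ent: "map (ent C) [0..<\<Delta>] = enum C" if "C \<in> nodeC Prb" for C
  proof -
    have "length (enum C) = \<Delta>" using wf that mset_enum unfolding wf_nec_def by (metis size_mset)
    then show ?thesis unfolding ent_def by (metis map_nth)
  qed
  have "\<forall>C\<in>nodeC Prb. mset (map (ent C) [0..<\<Delta>]) = C
      \<and> (\<forall>j<\<Delta>. \<phi> (ent C j) \<in> labels Prb')
      \<and> mset (map (\<lambda>j. \<phi> (ent C j)) [0..<\<Delta>]) \<in> nodeC Prb'"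
  proof (intro ballI conjI allI impI)
    fix C assume C: "C \<in> nodeC Prb"
    show "mset (map (ent C) [0..<\<Delta>]) = C" using ent[OF C] mset_enum by simp
    show "\<phi> (ent C j) \<in> labels Prb'" if "j < \<Delta>" for j
    proof -
      have "ent C j \<in> set (map (ent C) [0..<\<Delta>])" using that by simp
      then have "ent C j \<in># C" using ent[OF C] mset_enum by (metis set_mset_mset)
      then show ?thesis using nec_homD(1)[OF hom] wf_nec_labelsD(1)[OF wf C] by blast
    qed
    have "map (\<lambda>j. \<phi> (ent C j)) [0..<\<Delta>] = map \<phi> (map (ent C) [0..<\<Delta>])" by simp
    then have "mset (map (\<lambda>j. \<phi> (ent C j)) [0..<\<Delta>]) = image_mset \<phi> C"
      using ent[OF C] mset_enum by (simp only: mset_map)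
    then show "mset (map (\<lambda>j. \<phi> (ent C j)) [0..<\<Delta>]) \<in> nodeC Prb'"
      using nec_homD(2)[OF hom C] by simp
  qed
  moreover have "\<forall>C\<in>nodeC Prb. \<forall>C'\<in>nodeC Prb. \<forall>j<\<Delta>. \<forall>j'<\<Delta>.
      {#ent C j, ent C' j'#} \<in> edgeC Prb \<longrightarrow> {#\<phi> (ent C j), \<phi> (ent C' j')#} \<in> edgeC Prb'"
    using nec_homD(3)[OF hom] by blast
  ultimately show ?thesis
    unfolding relax0_def by (intro exI[of _ ent] exI[of _ "\<lambda>C j. \<phi> (ent C j)"]) blast
qed

lemma labels_tau: "labels (tau \<Delta> P Prb) = labels Prb \<rightarrow>\<^sub>E labels (Rstar \<Delta> P)"
  by (simp add: tau_def Let_def)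

lemma nodeC_tau: "M \<in> nodeC (tau \<Delta> P Prb) \<longleftrightarrow> size M = \<Delta> \<and> set_mset M \<subseteq> labels (tau \<Delta> P Prb) \<and>
    (\<exists>fs. mset fs = M \<and>
       (\<forall>Ls. length Ls = \<Delta> \<longrightarrow> mset Ls \<in> nodeC Prb \<longrightarrow>
             mset (map2 (\<lambda>g L. g L) fs Ls) \<in> nodeC (Rstar \<Delta> P)))"
  by (simp add: tau_def Let_def)

lemma edgeC_tau: "M \<in> edgeC (tau \<Delta> P Prb) \<longleftrightarrow>
    (\<exists>f1 f2. M = {#f1, f2#} \<and> f1 \<in> labels (tau \<Delta> P Prb) \<and> f2 \<in> labels (tau \<Delta> P Prb) \<and>
       (\<forall>L1 L2. {#L1, L2#} \<in> edgeC Prb \<longrightarrow> {#f1 L1, f2 L2#} \<in> edgeC (Rstar \<Delta> P)))"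
  by (simp add: tau_def Let_def)

lemma wf_nec_tau:
  assumes "wf_nec \<Delta> Prb" "wf_nec \<Delta> P"
  shows "wf_nec \<Delta> (tau \<Delta> P Prb)"
proof -
  have "finite (labels (Rstar \<Delta> P))"
    using assms(2) unfolding wf_nec_def Rstar_def by (auto intro: finite_subset[of _ "Pow (labels P)"])
  then have "finite (labels (tau \<Delta> P Prb))"
    using assms(1) unfolding labels_tau wf_nec_def by (auto intro: finite_PiE)
  then show ?thesis unfolding wf_nec_def by (auto simp: nodeC_tau edgeC_tau)
qed

lemma edge_pair_tau_iff:
  "{#g1, g2#} \<in> edgeC (tau \<Delta> P Prb) \<longleftrightarrow> g1 \<in> labels (tau \<Delta> P Prb) \<and> g2 \<in> labels (tau \<Delta> P Prb) \<and>
    (\<forall>L1 L2. {#L1, L2#} \<in> edgeC Prb \<longrightarrow> {#g1 L1, g2 L2#} \<in> edgeC (Rstar \<Delta> P))"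
  (is "_ \<longleftrightarrow> ?edge g1 g2")
proof
  assume "{#g1, g2#} \<in> edgeC (tau \<Delta> P Prb)"
  then obtain f1 f2 where f: "{#g1, g2#} = {#f1, f2#}" "?edge f1 f2"
    unfolding edgeC_tau by blast
  have "?edge f2 f1"
  proof (intro conjI allI impI)
    fix L1 L2 assume "{#L1, L2#} \<in> edgeC Prb"
    then have "{#f1 L2, f2 L1#} \<in> edgeC (Rstar \<Delta> P)" using f(2) by (simp add: add_mset_commute)
    then show "{#f2 L1, f1 L2#} \<in> edgeC (Rstar \<Delta> P)" by (simp add: add_mset_commute)
  qed (use f(2) in blast)+
  moreover from f(1) have "g1 = f1 \<and> g2 = f2 \<or> g1 = f2 \<and> g2 = f1" by (auto simp: add_eq_conv_ex)
  ultimately show "?edge g1 g2" using f(2) by blast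
next
  assume "?edge g1 g2"
  then show "{#g1, g2#} \<in> edgeC (tau \<Delta> P Prb)" unfolding edgeC_tau by blast
qed

lemma mset_eq_rearrange_zip:
  assumes "mset xs' = mset xs" "length ys = length xs"
  obtains ys' where "mset ys' = mset ys" "mset (zip xs' ys') = mset (zip xs ys)"
proof -
  obtain p where p: "p permutes {..<length xs}" "permute_list p xs = xs'"
    using mset_eq_permutation[OF assms(1)] by blast
  show ?thesis
  proof
    show "mset (permute_list p ys) = mset ys" using p(1) assms(2) by simp
    have "zip xs' (permute_list p ys) = permute_list p (zip xs ys)"
      using permute_list_zip[OF p(1) refl assms(2)[symmetric]] p(2) by simp
    then show "mset (zip xs' (permute_list p ys)) = mset (zip xs ys)" using p(1) assms(2) by simp
  qed
qed

text \<open>The definition of \<open>\<tau>\<close> asks for just one good enumeration of a node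
  configuration; rearranging the \<open>\<Pi>\<close>-configuration alongside shows that every enumeration is good.\<close>
lemma nodeC_tau_any_enumeration:
  assumes "mset gs \<in> nodeC (tau \<Delta> P Prb)" "length Ls = \<Delta>" "mset Ls \<in> nodeC Prb"
  shows "mset (map2 (\<lambda>g L. g L) gs Ls) \<in> nodeC (Rstar \<Delta> P)"
proof -
  obtain hs where hs: "mset hs = mset gs" and good: "\<forall>Ls. length Ls = \<Delta> \<longrightarrow> mset Ls \<in> nodeC Prb \<longrightarrow>
      mset (map2 (\<lambda>g L. g L) hs Ls) \<in> nodeC (Rstar \<Delta> P)"
    using assms(1) unfolding nodeC_tau by blast
  have "length gs = \<Delta>" using assms(1) unfolding nodeC_tau by (metis size_mset)
  then obtain Ls' where Ls': "mset Ls' = mset Ls" "mset (zip hs Ls') = mset (zip gs Ls)"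
    using mset_eq_rearrange_zip[OF hs] assms(2) by metis
  have "mset (map2 (\<lambda>g L. g L) hs Ls') \<in> nodeC (Rstar \<Delta> P)"
    using good Ls'(1) assms(2,3) by (metis size_mset)
  moreover have "mset (map2 (\<lambda>g L. g L) hs Ls') = mset (map2 (\<lambda>g L. g L) gs Ls)"
    using Ls'(2) by simp
  ultimately show ?thesis by simp
qed

definition evaluation :: "nat \<Rightarrow> 'b nec \<Rightarrow> 'a nec \<Rightarrow> 'a \<Rightarrow> ('a \<Rightarrow> 'b set) \<Rightarrow> 'b set" where
  "evaluation \<Delta> P Prb L = restrict (\<lambda>g. g L) (labels (tau \<Delta> P Prb))"

lemma evaluation_in_labels:
  assumes "L \<in> labels Prb"
  shows "evaluation \<Delta> P Prb L \<in> labels (tau \<Delta> P (tau \<Delta> P Prb))"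
  unfolding evaluation_def labels_tau[of \<Delta> P "tau \<Delta> P Prb"]
  using assms by (auto simp: labels_tau)

lemma nec_hom_evaluation:
  assumes wf: "wf_nec \<Delta> Prb"
  shows "nec_hom (evaluation \<Delta> P Prb) Prb (tau \<Delta> P (tau \<Delta> P Prb))"
  unfolding nec_hom_def
proof (intro conjI ballI allI impI)
  show "evaluation \<Delta> P Prb \<in> labels Prb \<rightarrow> labels (tau \<Delta> P (tau \<Delta> P Prb))"
    using evaluation_in_labels by (intro Pi_I)
next
  fix C assume C: "C \<in> nodeC Prb"
  obtain Ls where Ls: "mset Ls = C" using ex_mset by blast
  have len: "length Ls = \<Delta>" using wf C Ls unfolding wf_nec_def by (metis size_mset)
  have lab: "set Ls \<subseteq> labels Prb" using wf_nec_labelsD(1)[OF wf C] Ls by auto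
  have "mset (map2 (\<lambda>g L. g L) (map (evaluation \<Delta> P Prb) Ls) gs) \<in> nodeC (Rstar \<Delta> P)"
    if gs: "length gs = \<Delta>" "mset gs \<in> nodeC (tau \<Delta> P Prb)" for gs
  proof -
    have "set gs \<subseteq> labels (tau \<Delta> P Prb)" using gs(2) unfolding nodeC_tau by auto
    then have "gs ! i \<in> labels (tau \<Delta> P Prb)" if "i < \<Delta>" for i
      using nth_mem[of i gs] that gs(1) by blast
    then have "evaluation \<Delta> P Prb (Ls ! i) (gs ! i) = (gs ! i) (Ls ! i)" if "i < \<Delta>" for i
      using that unfolding evaluation_def by simp
    then have "map2 (\<lambda>g L. g L) (map (evaluation \<Delta> P Prb) Ls) gs = map2 (\<lambda>g L. g L) gs Ls"
      by (intro nth_equalityI) (simp_all add: len gs(1))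
    then show ?thesis using nodeC_tau_any_enumeration[OF gs(2) len] C Ls by simp
  qed
  moreover have "set (map (evaluation \<Delta> P Prb) Ls) \<subseteq> labels (tau \<Delta> P (tau \<Delta> P Prb))"
    using lab by (auto intro: evaluation_in_labels)
  ultimately show "image_mset (evaluation \<Delta> P Prb) C \<in> nodeC (tau \<Delta> P (tau \<Delta> P Prb))"
    unfolding nodeC_tau[of _ _ _ "tau \<Delta> P Prb"] Ls[symmetric]
    by (intro conjI exI[of _ "map (evaluation \<Delta> P Prb) Ls"]) (simp_all add: len)
next
  fix L1 L2 assume e: "{#L1, L2#} \<in> edgeC Prb"
  have "{#g1 L1, g2 L2#} \<in> edgeC (Rstar \<Delta> P)" "evaluation \<Delta> P Prb L1 g1 = g1 L1"
    "evaluation \<Delta> P Prb L2 g2 = g2 L2"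
    if "{#g1, g2#} \<in> edgeC (tau \<Delta> P Prb)" for g1 g2
    using that e unfolding edge_pair_tau_iff evaluation_def by auto
  moreover have "evaluation \<Delta> P Prb L1 \<in> labels (tau \<Delta> P (tau \<Delta> P Prb))"
    "evaluation \<Delta> P Prb L2 \<in> labels (tau \<Delta> P (tau \<Delta> P Prb))"
    using wf_nec_labelsD(2)[OF wf e] by (simp_all add: evaluation_in_labels)
  ultimately show "{#evaluation \<Delta> P Prb L1, evaluation \<Delta> P Prb L2#} \<in> edgeC (tau \<Delta> P (tau \<Delta> P Prb))"
    unfolding edge_pair_tau_iff[of _ _ \<Delta> P "tau \<Delta> P Prb"] by simp
qed

definition precompose :: "'a set \<Rightarrow> ('a \<Rightarrow> 'c) \<Rightarrow> ('c \<Rightarrow> 'd) \<Rightarrow> 'a \<Rightarrow> 'd" where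
  "precompose A \<phi> h = restrict (h \<circ> \<phi>) A"

lemma nec_hom_tau_precompose:
  assumes wf: "wf_nec \<Delta> Prb" and hom: "nec_hom \<phi> Prb Prb'"
  shows "nec_hom (precompose (labels Prb) \<phi>) (tau \<Delta> P Prb') (tau \<Delta> P Prb)"
proof -
  let ?\<psi> = "precompose (labels Prb) \<phi>"
  have lab: "?\<psi> h \<in> labels (tau \<Delta> P Prb)" if h: "h \<in> labels (tau \<Delta> P Prb')" for h
  proof -
    have "h (\<phi> L) \<in> labels (Rstar \<Delta> P)" if "L \<in> labels Prb" for L
      using PiE_mem[OF h[unfolded labels_tau] nec_homD(1)[OF hom that]] .
    then show ?thesis unfolding precompose_def labels_tau restrict_PiE_iff by simp
  qed
  have node: "image_mset ?\<psi> M \<in> nodeC (tau \<Delta> P Prb)" if M: "M \<in> nodeC (tau \<Delta> P Prb')" for M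
  proof -
    obtain fs where fs: "mset fs = M" using ex_mset by blast
    have len: "length fs = \<Delta>" using M fs unfolding nodeC_tau by (metis size_mset)
    have "mset (map2 (\<lambda>g L. g L) (map ?\<psi> fs) Ls) \<in> nodeC (Rstar \<Delta> P)"
      if Ls: "length Ls = \<Delta>" "mset Ls \<in> nodeC Prb" for Ls
    proof -
      have "set Ls \<subseteq> labels Prb" using wf_nec_labelsD(1)[OF wf Ls(2)] by auto
      then have "Ls ! i \<in> labels Prb" if "i < \<Delta>" for i
        using nth_mem[of i Ls] that Ls(1) by blast
      then have "?\<psi> (fs ! i) (Ls ! i) = (fs ! i) (\<phi> (Ls ! i))" if "i < \<Delta>" for i
        using that unfolding precompose_def by simp
      then have "map2 (\<lambda>g L. g L) (map ?\<psi> fs) Ls = map2 (\<lambda>g L. g L) fs (map \<phi> Ls)"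
        by (intro nth_equalityI) (simp_all add: len Ls(1))
      moreover have "mset (map \<phi> Ls) \<in> nodeC Prb'" using nec_homD(2)[OF hom Ls(2)] by simp
      ultimately show ?thesis
        using nodeC_tau_any_enumeration[of fs \<Delta> P Prb' "map \<phi> Ls"] M fs Ls(1) by simp
    qed
    moreover have "set (map ?\<psi> fs) \<subseteq> labels (tau \<Delta> P Prb)"
      using M fs lab unfolding nodeC_tau by auto
    ultimately show ?thesis
      unfolding nodeC_tau[of _ _ _ Prb] fs[symmetric]
      by (intro conjI exI[of _ "map ?\<psi> fs"]) (simp_all add: len)
  qed
  have edge: "{#?\<psi> h1, ?\<psi> h2#} \<in> edgeC (tau \<Delta> P Prb)"
    if e: "{#h1, h2#} \<in> edgeC (tau \<Delta> P Prb')" for h1 h2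
  proof -
    have "{#?\<psi> h1 L1, ?\<psi> h2 L2#} \<in> edgeC (Rstar \<Delta> P)" if "{#L1, L2#} \<in> edgeC Prb" for L1 L2
    proof -
      have "{#h1 (\<phi> L1), h2 (\<phi> L2)#} \<in> edgeC (Rstar \<Delta> P)"
        using e nec_homD(3)[OF hom that] unfolding edge_pair_tau_iff by blast
      then show ?thesis using wf_nec_labelsD(2)[OF wf that] unfolding precompose_def by simp
    qed
    then show ?thesis using e lab unfolding edge_pair_tau_iff by blast
  qed
  show ?thesis unfolding nec_hom_def using lab node edge by auto
qed

theorem mainTheorem11:
  fixes \<Delta> :: nat and Prb :: "'a nec" and P :: "'b nec"
  assumes "wf_nec \<Delta> Prb" and "wf_nec \<Delta> P"
  shows "relax0 \<Delta> Prb (tau \<Delta> P (tau \<Delta> P Prb))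
       \<and> relax0 \<Delta> (tau \<Delta> P Prb) (tau \<Delta> P (tau \<Delta> P (tau \<Delta> P Prb)))
       \<and> relax0 \<Delta> (tau \<Delta> P (tau \<Delta> P (tau \<Delta> P Prb))) (tau \<Delta> P Prb)"
proof -
  have wf1: "wf_nec \<Delta> (tau \<Delta> P Prb)" using wf_nec_tau assms by blast
  have wf3: "wf_nec \<Delta> (tau \<Delta> P (tau \<Delta> P (tau \<Delta> P Prb)))"
    using wf_nec_tau[OF wf_nec_tau[OF wf1 assms(2)] assms(2)] .
  have ev: "nec_hom (evaluation \<Delta> P Prb) Prb (tau \<Delta> P (tau \<Delta> P Prb))"
    using nec_hom_evaluation[OF assms(1)] .
  show ?thesis
    using relax0_if_nec_hom[OF assms(1) ev]
      relax0_if_nec_hom[OF wf1 nec_hom_evaluation[OF wf1]]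
      relax0_if_nec_hom[OF wf3 nec_hom_tau_precompose[OF assms(1) ev]] by blast
qed

end
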